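(* Let ${\mathbf{X}}\in\mathbb{R}_+^{m\times n}$, ${\mathbf{A}}_1\in\mathbb{R}^{k\times m}$, ${\mathbf{A}}_2\in\mathbb{R}^{n\times k}$ with ${\mathbf{A}}_1{\mathbf{X}}{\mathbf{A}}_2$ invertible. Let ${\mathbf{Q}}_1$ be a matrix whose columns form an orthonormal basis of the column space of ${\mathbf{X}}{\mathbf{A}}_2$, and ${\mathbf{Q}}_2$ a matrix whose columns form an orthonormal basis of the row space of ${\mathbf{A}}_1{\mathbf{X}}$. Let $\lambda_1,\lambda_2\ge0$ and let $\sigma_1,\sigma_2$ satisfy $$\sigma_1\ge\max_{a,b}\big(({\mathbf{A}}_1^T{\mathbf{A}}_1)_{ab}\big)_-,\quad \sigma_1\ge\max_{a,b}\big(({\mathbf{A}}_1^T{\mathbf{A}}_1+\lambda_1({\mathbf{I}}-{\mathbf{Q}}_1{\mathbf{Q}}_1^T))_{ab}\big)_-,$$ $$\sigma_2\ge\max_{a,b}\big(({\mathbf{A}}_2{\mathbf{A}}_2^T)_{ab}\big)_-,\quad \sigma_2\ge\max_{a,b}\big(({\mathbf{A}}_2{\mathbf{A}}_2^T+\lambda_2({\mathbf{I}}-{\mathbf{Q}}_2{\mathbf{Q}}_2^T))_{ab}\big)_-.$$ Set ${\mathbf{A}}_{1,\sigma}={\mathbf{A}}_1^T{\mathbf{A}}_1+\sigma_1\mathbf{1}_m\mathbf{1}_m^T$ and ${\mathbf{A}}_{2,\sigma}={\mathbf{A}}_2{\mathbf{A}}_2^T+\sigma_2\mathbf{1}_n\mathbf{1}_n^T$.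 Then, for entrywise nonnegative ${\mathbf{U}}\in\mathbb{R}^{m\times r}$, ${\mathbf{V}}\in\mathbb{R}^{n\times r}$ (with the denominators below entrywise positive), the objective $$\|{\mathbf{A}}_1({\mathbf{X}}-{\mathbf{U}}{\mathbf{V}}^T)\|_F^2+\|({\mathbf{X}}-{\mathbf{U}}{\mathbf{V}}^T){\mathbf{A}}_2\|_F^2+\lambda_1\|({\mathbf{I}}-{\mathbf{Q}}_1{\mathbf{Q}}_1^T){\mathbf{U}}{\mathbf{V}}^T\|_F^2+\lambda_2\|{\mathbf{U}}{\mathbf{V}}^T({\mathbf{I}}-{\mathbf{Q}}_2{\mathbf{Q}}_2^T)\|_F^2+\sigma_1\|\mathbf{1}_m^T({\mathbf{X}}-{\mathbf{U}}{\mathbf{V}}^T)\|_2^2+\sigma_2\|({\mathbf{X}}-{\mathbf{U}}{\mathbf{V}}^T)\mathbf{1}_n\|_2^2$$ does not increase under each of the updates $${\mathbf{U}}\leftarrow{\mathbf{U}}\circ\frac{{\mathbf{A}}_{1,\sigma}{\mathbf{X}}{\mathbf{V}}+{\mathbf{X}}{\mathbf{A}}_{2,\sigma}{\mathbf{V}}}{({\mathbf{A}}_{1,\sigma}+\lambda_1({\mathbf{I}}-{\mathbf{Q}}_1{\mathbf{Q}}_1^T)){\mathbf{U}}{\mathbf{V}}^T{\mathbf{V}}+{\mathbf{U}}{\mathbf{V}}^T({\mathbf{A}}_{2,\sigma}+\lambda_2({\mathbf{I}}-{\mathbf{Q}}_2{\mathbf{Q}}_2^T)){\mathbf{V}}},$$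 $${\mathbf{V}}\leftarrow{\mathbf{V}}\circ\frac{{\mathbf{X}}^T{\mathbf{A}}_{1,\sigma}{\mathbf{U}}+{\mathbf{A}}_{2,\sigma}{\mathbf{X}}^T{\mathbf{U}}}{{\mathbf{V}}{\mathbf{U}}^T({\mathbf{A}}_{1,\sigma}+\lambda_1({\mathbf{I}}-{\mathbf{Q}}_1{\mathbf{Q}}_1^T)){\mathbf{U}}+({\mathbf{A}}_{2,\sigma}+\lambda_2({\mathbf{I}}-{\mathbf{Q}}_2{\mathbf{Q}}_2^T)){\mathbf{V}}{\mathbf{U}}^T{\mathbf{U}}},$$ and the updated factors remain entrywise nonnegative.
   Context: $\mathbb{R}_+^{m\times n}$ denotes entrywise nonnegative $m\times n$ matrices; $(x)_-=-\min(x,0)$; $\mathbf{1}_m$ is the all-ones vector in $\mathbb{R}^m$; $\circ$ is entrywise product and the fraction bar is entrywise division. $\|\cdot\|_F$ is the Frobenius norm, $\|\cdot\|_2$ the Euclidean norm. *)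

theory Defs
  imports "HOL-Analysis.Analysis"
begin

text \<open>Matrices are rendered as \<open>real^'c^'r\<close> (rows indexed by 'r, columns by 'c).\<close>

definition negpart :: "real \<Rightarrow> real" where
  "negpart x = - min x 0"

definition max_negpart :: "real^'b^'a \<Rightarrow> real" where
  "max_negpart M = Max {negpart (M $ a $ b) | a b. True}"

definition frob_sq :: "real^'b^'a \<Rightarrow> real" where
  "frob_sq M = (\<Sum>i\<in>UNIV. \<Sum>j\<in>UNIV. (M $ i $ j)^2)"

definition nonneg_mat :: "real^'b^'a \<Rightarrow> bool" where
  "nonneg_mat M \<longleftrightarrow> (\<forall>i j. 0 \<le> M $ i $ j)"

definition pos_mat :: "real^'b^'a \<Rightarrow> bool" where
  "pos_mat M \<longleftrightarrow> (\<forall>i j. 0 < M $ i $ j)"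

definition hadamard :: "real^'b^'a \<Rightarrow> real^'b^'a \<Rightarrow> real^'b^'a" where
  "hadamard A B = (\<chi> i j. A $ i $ j * B $ i $ j)"

definition ediv :: "real^'b^'a \<Rightarrow> real^'b^'a \<Rightarrow> real^'b^'a" where
  "ediv A B = (\<chi> i j. A $ i $ j / B $ i $ j)"

definition ones_mat :: "real^'b^'a" where
  "ones_mat = (\<chi> i j. 1)"

definition ones_vec :: "real^'a" where
  "ones_vec = (\<chi> i. 1)"

definition orthonormal_basis_cols :: "real^'c^'a \<Rightarrow> (real^'a) set \<Rightarrow> bool" where
  "orthonormal_basis_cols Q S \<longleftrightarrow> transpose Q ** Q = mat 1 \<and> span (columns Q) = S"

definition nmf_obj ::
  "real^'n^'m \<Rightarrow> real^'m^'k \<Rightarrow> real^'k^'n \<Rightarrow> real^'c^'m \<Rightarrow> real^'d^'n \<Rightarrow>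
   real \<Rightarrow> real \<Rightarrow> real \<Rightarrow> real \<Rightarrow> real^'r^'m \<Rightarrow> real^'r^'n \<Rightarrow> real" where
  "nmf_obj X A1 A2 Q1 Q2 l1 l2 s1 s2 U V =
     (let R = X - U ** transpose V; W = U ** transpose V in
        frob_sq (A1 ** R) + frob_sq (R ** A2)
      + l1 * frob_sq ((mat 1 - Q1 ** transpose Q1) ** W)
      + l2 * frob_sq (W ** (mat 1 - Q2 ** transpose Q2))
      + s1 * (norm (transpose R *v ones_vec))^2
      + s2 * (norm (R *v ones_vec))^2)"

end

theory Submission
  imports Defs
begin

text \<open>With \<open>V\<close> fixed and \<open>W = U V\<^sup>T\<close>, the objective is a quadratic in \<open>U\<close>: the
  \<open>\<sigma>\<close>-terms combine with \<open>A\<^sub>1\<^sup>T A\<^sub>1\<close> and \<open>A\<^sub>2 A\<^sub>2\<^sup>T\<close> into \<open>A\<^sub>1\<^sub>\<sigma>\<close>, \<open>A\<^sub>2\<^sub>\<sigma>\<close>, and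
  since \<open>I - Q Q\<^sup>T\<close> is a symmetric idempotent the \<open>\<lambda>\<close>-terms are quadratic forms in \<open>W\<close>, so
  \<open>f(U) = c + \<langle>P\<^sub>1 U M + U N, U\<rangle> - 2\<langle>B, U\<rangle>\<close> with \<open>M = V\<^sup>T V\<close>, \<open>N = V\<^sup>T P\<^sub>2 V\<close>.
  The choice of \<open>\<sigma>\<^sub>1, \<sigma>\<^sub>2\<close> makes \<open>P\<^sub>1, P\<^sub>2\<close> and \<open>A\<^sub>i\<^sub>\<sigma>\<close> entrywise nonnegative, so all kernels are
  symmetric and nonnegative and the Lee--Seung bound
  \<open>\<langle>P (U\<circ>Y) M, U\<circ>Y\<rangle> \<le> \<Sum> U Y\<^sup>2 (P U M)\<close> holds. Hence \<open>f(U\<circ>Y) \<le> c + \<Sum> U (D Y\<^sup>2 - 2 B Y)\<close>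
  with \<open>D = P\<^sub>1 U M + U N\<close>; the right-hand side is minimised entrywise by \<open>Y = B / D\<close> and
  equals \<open>f(U)\<close> at \<open>Y = 1\<close>. The \<open>V\<close>-update is the \<open>U\<close>-update of the transposed problem.\<close>

lemma inner_matrix: "A \<bullet> B = (\<Sum>i\<in>UNIV. \<Sum>j\<in>UNIV. (A::real^'b^'a) $ i $ j * B $ i $ j)"
  by (simp add: inner_vec_def)

lemma frob_sq_eq_inner: "frob_sq M = M \<bullet> (M::real^'b^'a)"
  by (simp add: frob_sq_def inner_matrix power2_eq_square)

lemma inner_transpose: "transpose A \<bullet> transpose B = A \<bullet> (B::real^'b^'a)"
  unfolding inner_matrix transpose_def by (simp, rule sum.swap)

lemma inner_matrix_mult_right:
  "A \<bullet> (B ** C) = (A ** transpose C) \<bullet> (B::real^'b^'a)"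
  unfolding inner_matrix matrix_matrix_mult_def transpose_def
  by (simp add: sum_distrib_left sum_distrib_right mult_ac, rule sum.cong, simp, rule sum.swap)

lemma inner_matrix_mult_left:
  "A \<bullet> (B ** C) = (transpose B ** A) \<bullet> (C::real^'b^'a)"
proof -
  have "A \<bullet> (B ** C) = transpose A \<bullet> (transpose C ** transpose B)"
    by (subst inner_transpose[symmetric]) (simp add: matrix_transpose_mul)
  also have "\<dots> = (transpose A ** B) \<bullet> transpose C"
    by (simp add: inner_matrix_mult_right)
  also have "\<dots> = (transpose B ** A) \<bullet> C"
    using inner_transpose[of "transpose B ** A" C] by (simp add: matrix_transpose_mul)
  finally show ?thesis .
qed

lemma matrix_add_rdistrib: "(A + B) ** C = A ** C + B ** (C::real^'c^'b)"
  by (simp add: matrix_matrix_mult_def vec_eq_iff algebra_simps sum.distrib)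

lemma matrix_diff_ldistrib: "A ** (B - C) = A ** B - A ** (C::real^'c^'b)"
  by (simp add: matrix_matrix_mult_def vec_eq_iff algebra_simps sum_subtractf)

lemma matrix_diff_rdistrib: "(A - B) ** C = A ** C - B ** (C::real^'c^'b)"
  by (simp add: matrix_matrix_mult_def vec_eq_iff algebra_simps sum_subtractf)

lemma transpose_add: "transpose (A + B) = transpose A + transpose (B::real^'b^'a)"
  by (simp add: transpose_def vec_eq_iff)

lemma transpose_diff: "transpose (A - B) = transpose A - transpose (B::real^'b^'a)"
  by (simp add: transpose_def vec_eq_iff)

lemma transpose_ones_mat [simp]: "transpose (ones_mat :: real^'b^'a) = ones_mat"
  by (simp add: transpose_def ones_mat_def vec_eq_iff)

lemma norm_col_sums_sq: "(norm (transpose R *v ones_vec))\<^sup>2 = (ones_mat ** R) \<bullet> (R::real^'b^'a)"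
proof -
  have "(norm (transpose R *v ones_vec))\<^sup>2 = (\<Sum>j\<in>UNIV. (\<Sum>i\<in>UNIV. R$i$j) * (\<Sum>k\<in>UNIV. R$k$j))"
    by (simp add: power2_norm_eq_inner inner_vec_def matrix_vector_mult_def transpose_def ones_vec_def)
  also have "\<dots> = (\<Sum>j\<in>UNIV. \<Sum>i\<in>UNIV. R$i$j * (\<Sum>k\<in>UNIV. R$k$j))"
    by (simp add: sum_distrib_right)
  also have "\<dots> = (ones_mat ** R) \<bullet> R"
    unfolding inner_matrix by (simp add: matrix_matrix_mult_def ones_mat_def mult.commute, rule sum.swap)
  finally show ?thesis .
qed

lemma norm_row_sums_sq: "(norm (R *v ones_vec))\<^sup>2 = (R ** ones_mat) \<bullet> (R::real^'b^'a)"
proof -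
  have "(norm (R *v ones_vec))\<^sup>2 = (\<Sum>i\<in>UNIV. (\<Sum>j\<in>UNIV. R$i$j) * (\<Sum>k\<in>UNIV. R$i$k))"
    by (simp add: power2_norm_eq_inner inner_vec_def matrix_vector_mult_def ones_vec_def)
  also have "\<dots> = (R ** ones_mat) \<bullet> R"
    unfolding inner_matrix by (simp add: matrix_matrix_mult_def ones_mat_def sum_distrib_right mult.commute)
  finally show ?thesis .
qed

lemma transpose_complement_projector:
  "transpose (mat 1 - Q ** transpose Q) = mat 1 - Q ** transpose (Q::real^'c^'a)"
  by (simp add: transpose_diff matrix_transpose_mul)

lemma complement_projector_idem:
  assumes "transpose Q ** Q = mat 1"
  shows "(mat 1 - Q ** transpose Q) ** (mat 1 - Q ** transpose Q) = mat 1 - Q ** transpose (Q::real^'c^'a)"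
proof -
  have "Q ** transpose Q ** (Q ** transpose Q) = Q ** (transpose Q ** Q) ** transpose Q"
    by (simp add: matrix_mul_assoc)
  then have "Q ** transpose Q ** (Q ** transpose Q) = Q ** transpose Q"
    by (simp add: assms)
  then show ?thesis by (simp add: matrix_diff_ldistrib matrix_diff_rdistrib)
qed

lemma frob_sq_projector_left:
  assumes "transpose E = E" "E ** E = E"
  shows "frob_sq (E ** W) = (E ** W) \<bullet> (W::real^'b^'a)"
  using inner_matrix_mult_left[of "E ** W" E W]
  by (simp add: frob_sq_eq_inner assms matrix_mul_assoc)

lemma frob_sq_projector_right:
  assumes "transpose E = E" "E ** E = E"
  shows "frob_sq (W ** E) = (W ** E) \<bullet> (W::real^'b^'a)"
  using inner_matrix_mult_right[of "W ** E" W E]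
  by (simp add: frob_sq_eq_inner assms matrix_mul_assoc[symmetric])

lemma inner_symmetric_left_diff:
  assumes "transpose S = S"
  shows "(S ** (X - W)) \<bullet> (X - W) = (S ** X) \<bullet> X - 2 * ((S ** X) \<bullet> W) + (S ** W) \<bullet> (W::real^'b^'a)"
proof -
  have "(S ** W) \<bullet> X = (S ** X) \<bullet> W"
    using inner_matrix_mult_left[of X S W] by (simp add: assms inner_commute)
  then show ?thesis by (simp add: matrix_diff_ldistrib inner_diff_left inner_diff_right inner_commute)
qed

lemma inner_symmetric_right_diff:
  assumes "transpose T = T"
  shows "((X - W) ** T) \<bullet> (X - W) = (X ** T) \<bullet> X - 2 * ((X ** T) \<bullet> W) + (W ** T) \<bullet> (W::real^'b^'a)"
proof -
  have "(W ** T) \<bullet> X = (X ** T) \<bullet> W"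
    using inner_matrix_mult_right[of X W T] by (simp add: assms inner_commute)
  then show ?thesis by (simp add: matrix_diff_rdistrib inner_diff_left inner_diff_right inner_commute)
qed

lemma symmetric_kernel_quadratic_le:
  fixes K :: "'a::finite \<Rightarrow> 'a \<Rightarrow> real"
  assumes sym: "\<And>x y. K x y = K y x" and nonneg: "\<And>x y. 0 \<le> K x y"
  shows "(\<Sum>x\<in>UNIV. \<Sum>y\<in>UNIV. K x y * f x * f y) \<le> (\<Sum>x\<in>UNIV. \<Sum>y\<in>UNIV. K x y * (f x)\<^sup>2)"
proof -
  have "2 * (K x y * f x * f y) \<le> K x y * (f x)\<^sup>2 + K x y * (f y)\<^sup>2" for x y
  proof -
    have "K x y * (2 * f x * f y) \<le> K x y * ((f x)\<^sup>2 + (f y)\<^sup>2)"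
      using sum_squares_bound mult_left_mono nonneg by blast
    then show ?thesis by (simp add: algebra_simps)
  qed
  then have "2 * (\<Sum>x\<in>UNIV. \<Sum>y\<in>UNIV. K x y * f x * f y)
      \<le> (\<Sum>x\<in>UNIV. \<Sum>y\<in>UNIV. K x y * (f x)\<^sup>2) + (\<Sum>x\<in>UNIV. \<Sum>y\<in>UNIV. K x y * (f y)\<^sup>2)"
    by (simp add: sum_distrib_left sum.distrib[symmetric] sum_mono)
  also have "(\<Sum>x\<in>UNIV. \<Sum>y\<in>UNIV. K x y * (f y)\<^sup>2) = (\<Sum>x\<in>UNIV. \<Sum>y\<in>UNIV. K x y * (f x)\<^sup>2)"
    by (subst sum.swap) (simp add: sym)
  finally show ?thesis by simp
qed

lemma sum_UNIV_prod: "(\<Sum>p\<in>UNIV. g p) = (\<Sum>i\<in>UNIV. \<Sum>j\<in>UNIV. (g (i, j) :: 'c::comm_monoid_add))"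
  by (simp add: sum.cartesian_product UNIV_Times_UNIV[symmetric] del: UNIV_Times_UNIV)

lemma inner_hadamard_le:
  fixes P :: "real^'m^'m" and M :: "real^'r^'r" and U Y :: "real^'r^'m"
  assumes "transpose P = P" "transpose M = M" "nonneg_mat P" "nonneg_mat M" "nonneg_mat U"
  shows "(P ** hadamard U Y ** M) \<bullet> hadamard U Y
      \<le> (\<Sum>i\<in>UNIV. \<Sum>j\<in>UNIV. U$i$j * (Y$i$j)\<^sup>2 * (P ** U ** M)$i$j)"
proof -
  define K where "K p q = P$fst p$fst q * M$snd q$snd p * U$fst p$snd p * U$fst q$snd q"
    for p q :: "'m \<times> 'r"
  define y where "y p = Y$fst p$snd p" for p
  have "(P ** hadamard U Y ** M) \<bullet> hadamard U Y = (\<Sum>p\<in>UNIV. \<Sum>q\<in>UNIV. K p q * y p * y q)"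
    unfolding sum_UNIV_prod inner_matrix matrix_matrix_mult_def hadamard_def K_def y_def
    by (simp add: sum_distrib_left sum_distrib_right mult_ac, (rule sum.cong, simp)+, rule sum.swap)
  also have "\<dots> \<le> (\<Sum>p\<in>UNIV. \<Sum>q\<in>UNIV. K p q * (y p)\<^sup>2)"
  proof (rule symmetric_kernel_quadratic_le)
    have "P$a$b = P$b$a" "M$a'$b' = M$b'$a'" for a b a' b'
      using assms(1,2) by (metis transpose_def vec_lambda_beta)+
    then show "K p q = K q p" for p q
      by (simp add: K_def mult_ac)
    show "0 \<le> K p q" for p q
      using assms(3-5) by (simp add: K_def nonneg_mat_def)
  qed
  also have "\<dots> = (\<Sum>i\<in>UNIV. \<Sum>j\<in>UNIV. U$i$j * (Y$i$j)\<^sup>2 * (P ** U ** M)$i$j)"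
    unfolding sum_UNIV_prod matrix_matrix_mult_def K_def y_def
    by (simp add: sum_distrib_left sum_distrib_right mult_ac, (rule sum.cong, simp)+, rule sum.swap)
  finally show ?thesis .
qed

lemma multiplicative_update_pointwise_le:
  fixes b d u :: real
  assumes "0 < d" "0 \<le> u"
  shows "u * (b / d)\<^sup>2 * d - 2 * (b * (u * (b / d))) \<le> d * u - 2 * (b * u)"
proof -
  have "d * u - 2 * (b * u) - (u * (b / d)\<^sup>2 * d - 2 * (b * (u * (b / d)))) = u * (d - b)\<^sup>2 / d"
    using assms(1) by (simp add: field_simps power2_eq_square)
  moreover have "0 \<le> u * (d - b)\<^sup>2 / d"
    using assms by simp
  ultimately show ?thesis by linarith
qed

lemma multiplicative_update_decreases:
  fixes P :: "real^'m^'m" and M N :: "real^'r^'r" and U B D :: "real^'r^'m"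
  assumes P_sym: "transpose P = P" and M_sym: "transpose M = M" and N_sym: "transpose N = N"
    and P: "nonneg_mat P" and M: "nonneg_mat M" and N: "nonneg_mat N" and U: "nonneg_mat U"
    and D: "D = P ** U ** M + U ** N" and D_pos: "pos_mat D"
  defines "U' \<equiv> hadamard U (ediv B D)"
  shows "(P ** U' ** M + U' ** N) \<bullet> U' - 2 * (B \<bullet> U')
      \<le> (P ** U ** M + U ** N) \<bullet> U - 2 * (B \<bullet> U)"
proof -
  define Y where "Y = ediv B D"
  have "(P ** U' ** M) \<bullet> U' \<le> (\<Sum>i\<in>UNIV. \<Sum>j\<in>UNIV. U$i$j * (Y$i$j)\<^sup>2 * (P ** U ** M)$i$j)"
    unfolding U'_def Y_def[symmetric] using P_sym M_sym P M U by (rule inner_hadamard_le)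
  moreover have "(U' ** N) \<bullet> U' \<le> (\<Sum>i\<in>UNIV. \<Sum>j\<in>UNIV. U$i$j * (Y$i$j)\<^sup>2 * (U ** N)$i$j)"
  proof -
    have "nonneg_mat (mat 1 :: real^'m^'m)"
      by (simp add: nonneg_mat_def mat_def)
    then show ?thesis
      using inner_hadamard_le[of "mat 1" N U Y] N_sym N U by (simp add: U'_def Y_def)
  qed
  ultimately have "(P ** U' ** M + U' ** N) \<bullet> U' \<le> (\<Sum>i\<in>UNIV. \<Sum>j\<in>UNIV. U$i$j * (Y$i$j)\<^sup>2 * D$i$j)"
    by (simp add: D inner_add_left algebra_simps sum.distrib)
  moreover have "(\<Sum>i\<in>UNIV. \<Sum>j\<in>UNIV. U$i$j * (Y$i$j)\<^sup>2 * D$i$j) - 2 * (B \<bullet> U')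
      \<le> D \<bullet> U - 2 * (B \<bullet> U)"
  proof -
    have "(\<Sum>i\<in>UNIV. \<Sum>j\<in>UNIV. U$i$j * (Y$i$j)\<^sup>2 * D$i$j) - 2 * (B \<bullet> U')
        = (\<Sum>i\<in>UNIV. \<Sum>j\<in>UNIV. U$i$j * (B$i$j / D$i$j)\<^sup>2 * D$i$j
                                   - 2 * (B$i$j * (U$i$j * (B$i$j / D$i$j))))"
      by (simp add: inner_matrix U'_def Y_def hadamard_def ediv_def sum_subtractf sum_distrib_left)
    also have "\<dots> \<le> (\<Sum>i\<in>UNIV. \<Sum>j\<in>UNIV. D$i$j * U$i$j - 2 * (B$i$j * U$i$j))"
      using D_pos U
      by (intro sum_mono multiplicative_update_pointwise_le) (auto simp: pos_mat_def nonneg_mat_def)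
    also have "\<dots> = D \<bullet> U - 2 * (B \<bullet> U)"
      by (simp add: inner_matrix sum_subtractf sum_distrib_left)
    finally show ?thesis .
  qed
  ultimately show ?thesis
    unfolding D[symmetric] by linarith
qed

lemma nonneg_mat_hadamard_ediv:
  "nonneg_mat U \<Longrightarrow> nonneg_mat B \<Longrightarrow> pos_mat D \<Longrightarrow> nonneg_mat (hadamard U (ediv B D))"
  unfolding nonneg_mat_def pos_mat_def hadamard_def ediv_def by (simp add: less_imp_le)

lemma nmf_obj_quadratic_U:
  fixes X :: "real^'n^'m" and A1 :: "real^'m^'k" and A2 :: "real^'k^'n"
    and Q1 :: "real^'c^'m" and Q2 :: "real^'d^'n"
    and U :: "real^'r^'m" and V :: "real^'r^'n" and l1 l2 s1 s2 :: real
  assumes Q1: "transpose Q1 ** Q1 = mat 1" and Q2: "transpose Q2 ** Q2 = mat 1"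
  defines "A1s \<equiv> transpose A1 ** A1 + s1 *\<^sub>R ones_mat"
    and "A2s \<equiv> A2 ** transpose A2 + s2 *\<^sub>R ones_mat"
    and "E1 \<equiv> mat 1 - Q1 ** transpose Q1"
    and "E2 \<equiv> mat 1 - Q2 ** transpose Q2"
  shows "nmf_obj X A1 A2 Q1 Q2 l1 l2 s1 s2 U V =
     (A1s ** X) \<bullet> X + (X ** A2s) \<bullet> X
     + ((A1s + l1 *\<^sub>R E1) ** U ** (transpose V ** V)
        + U ** (transpose V ** (A2s + l2 *\<^sub>R E2) ** V)) \<bullet> U
     - 2 * ((A1s ** X ** V + X ** A2s ** V) \<bullet> U)" (is "_ = ?rhs")
proof -
  define W where "W = U ** transpose V"
  define R where "R = X - W"
  have E1: "transpose E1 = E1" "E1 ** E1 = E1"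
    unfolding E1_def using transpose_complement_projector complement_projector_idem[OF Q1] by blast+
  have E2: "transpose E2 = E2" "E2 ** E2 = E2"
    unfolding E2_def using transpose_complement_projector complement_projector_idem[OF Q2] by blast+
  have A1s: "transpose A1s = A1s" and A2s: "transpose A2s = A2s"
    unfolding A1s_def A2s_def by (simp_all add: transpose_add transpose_scalar matrix_transpose_mul)
  have A1R: "frob_sq (A1 ** R) + s1 * (norm (transpose R *v ones_vec))\<^sup>2 = (A1s ** R) \<bullet> R"
    using inner_matrix_mult_left[of "A1 ** R" A1 R] norm_col_sums_sq[of R]
    by (simp add: frob_sq_eq_inner A1s_def matrix_mul_assoc matrix_add_rdistrib
        scalar_matrix_assoc[symmetric] inner_add_left)
  have RA2: "frob_sq (R ** A2) + s2 * (norm (R *v ones_vec))\<^sup>2 = (R ** A2s) \<bullet> R"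
    using inner_matrix_mult_right[of "R ** A2" R A2]
    by (simp add: frob_sq_eq_inner norm_row_sums_sq A2s_def matrix_mul_assoc matrix_add_ldistrib
        matrix_scalar_ac scalar_matrix_assoc[symmetric] inner_add_left)
  have "nmf_obj X A1 A2 Q1 Q2 l1 l2 s1 s2 U V
      = (A1s ** R) \<bullet> R + (R ** A2s) \<bullet> R + l1 * ((E1 ** W) \<bullet> W) + l2 * ((W ** E2) \<bullet> W)"
    unfolding nmf_obj_def Let_def W_def[symmetric] R_def[symmetric] E1_def[symmetric] E2_def[symmetric]
      frob_sq_projector_left[OF E1] frob_sq_projector_right[OF E2] A1R[symmetric] RA2[symmetric]
    by simp
  also have "\<dots> = (A1s ** X) \<bullet> X + (X ** A2s) \<bullet> X
      + ((A1s + l1 *\<^sub>R E1) ** W) \<bullet> W + (W ** (A2s + l2 *\<^sub>R E2)) \<bullet> W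
      - 2 * ((A1s ** X) \<bullet> W + (X ** A2s) \<bullet> W)"
    unfolding R_def inner_symmetric_left_diff[OF A1s] inner_symmetric_right_diff[OF A2s]
    by (simp add: matrix_add_rdistrib matrix_add_ldistrib scalar_matrix_assoc[symmetric]
        matrix_scalar_ac inner_add_left algebra_simps)
  also have "\<dots> = ?rhs"
    unfolding W_def inner_matrix_mult_right[of _ U "transpose V"]
    by (simp add: matrix_mul_assoc inner_add_left algebra_simps)
  finally show ?thesis .
qed

lemma max_negpart_ge: "- max_negpart G \<le> (G::real^'b^'a) $ a $ b"
proof -
  have "{negpart (G $ a $ b) | a b. True} = (\<lambda>(a, b). negpart (G $ a $ b)) ` UNIV"
    by auto
  then have "finite {negpart (G $ a $ b) | a b. True}"
    by simp
  then have "negpart (G $ a $ b) \<le> max_negpart G"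
    unfolding max_negpart_def by (rule Max_ge) blast
  then show ?thesis by (simp add: negpart_def)
qed

lemma nonneg_mat_shift:
  assumes "max_negpart G \<le> s"
  shows "nonneg_mat (G + s *\<^sub>R (ones_mat :: real^'b^'a))"
proof -
  have "0 \<le> G $ i $ j + s" for i j
    using max_negpart_ge[of G i j] assms by linarith
  then show ?thesis
    by (simp add: nonneg_mat_def ones_mat_def)
qed

lemma nonneg_mat_add: "nonneg_mat A \<Longrightarrow> nonneg_mat B \<Longrightarrow> nonneg_mat (A + (B::real^'b^'a))"
  unfolding nonneg_mat_def by simp

lemma nonneg_mat_mult:
  "nonneg_mat A \<Longrightarrow> nonneg_mat B \<Longrightarrow> nonneg_mat ((A::real^'b^'a) ** (B::real^'c^'b))"
  unfolding nonneg_mat_def matrix_matrix_mult_def by (auto intro!: sum_nonneg)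

lemma nonneg_mat_transpose: "nonneg_mat (transpose A) \<longleftrightarrow> nonneg_mat (A::real^'b^'a)"
  unfolding nonneg_mat_def transpose_def by auto

lemma nmf_update_U:
  fixes X :: "real^'n^'m" and A1 :: "real^'m^'k" and A2 :: "real^'k^'n"
    and Q1 :: "real^'c^'m" and Q2 :: "real^'d^'n"
    and U :: "real^'r^'m" and V :: "real^'r^'n" and l1 l2 s1 s2 :: real
  assumes X: "nonneg_mat X" and U: "nonneg_mat U" and V: "nonneg_mat V"
    and Q1: "transpose Q1 ** Q1 = mat 1" and Q2: "transpose Q2 ** Q2 = mat 1"
    and s1a: "s1 \<ge> max_negpart (transpose A1 ** A1)"
    and s1b: "s1 \<ge> max_negpart (transpose A1 ** A1 + l1 *\<^sub>R (mat 1 - Q1 ** transpose Q1))"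
    and s2a: "s2 \<ge> max_negpart (A2 ** transpose A2)"
    and s2b: "s2 \<ge> max_negpart (A2 ** transpose A2 + l2 *\<^sub>R (mat 1 - Q2 ** transpose Q2))"
  defines "A1s \<equiv> transpose A1 ** A1 + s1 *\<^sub>R ones_mat"
    and "A2s \<equiv> A2 ** transpose A2 + s2 *\<^sub>R ones_mat"
  defines "P1 \<equiv> A1s + l1 *\<^sub>R (mat 1 - Q1 ** transpose Q1)"
    and "P2 \<equiv> A2s + l2 *\<^sub>R (mat 1 - Q2 ** transpose Q2)"
  defines "DU \<equiv> P1 ** U ** transpose V ** V + U ** transpose V ** P2 ** V"
  defines "U' \<equiv> hadamard U (ediv (A1s ** X ** V + X ** A2s ** V) DU)"
  assumes DU_pos: "pos_mat DU"
  shows "nmf_obj X A1 A2 Q1 Q2 l1 l2 s1 s2 U' V \<le> nmf_obj X A1 A2 Q1 Q2 l1 l2 s1 s2 U V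
    \<and> nonneg_mat U'"
proof
  define B where "B = A1s ** X ** V + X ** A2s ** V"
  have A1s_nn: "nonneg_mat A1s" and A2s_nn: "nonneg_mat A2s"
    unfolding A1s_def A2s_def using s1a s2a by (auto intro: nonneg_mat_shift)
  have "P1 = (transpose A1 ** A1 + l1 *\<^sub>R (mat 1 - Q1 ** transpose Q1)) + s1 *\<^sub>R ones_mat"
    and "P2 = (A2 ** transpose A2 + l2 *\<^sub>R (mat 1 - Q2 ** transpose Q2)) + s2 *\<^sub>R ones_mat"
    by (simp_all add: P1_def P2_def A1s_def A2s_def algebra_simps)
  then have P1_nn: "nonneg_mat P1" and P2_nn: "nonneg_mat P2"
    using s1b s2b by (auto intro: nonneg_mat_shift)
  have P1_sym: "transpose P1 = P1" and P2_sym: "transpose P2 = P2"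
    by (simp_all add: P1_def P2_def A1s_def A2s_def transpose_add transpose_diff transpose_scalar
        matrix_transpose_mul)
  have DU_eq: "DU = P1 ** U ** (transpose V ** V) + U ** (transpose V ** P2 ** V)"
    by (simp add: DU_def matrix_mul_assoc)
  have obj: "nmf_obj X A1 A2 Q1 Q2 l1 l2 s1 s2 W V = (A1s ** X) \<bullet> X + (X ** A2s) \<bullet> X
      + (P1 ** W ** (transpose V ** V) + W ** (transpose V ** P2 ** V)) \<bullet> W - 2 * (B \<bullet> W)" for W
    unfolding P1_def P2_def B_def A1s_def A2s_def by (rule nmf_obj_quadratic_U[OF Q1 Q2])
  have "(P1 ** U' ** (transpose V ** V) + U' ** (transpose V ** P2 ** V)) \<bullet> U' - 2 * (B \<bullet> U')
      \<le> (P1 ** U ** (transpose V ** V) + U ** (transpose V ** P2 ** V)) \<bullet> U - 2 * (B \<bullet> U)"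
    unfolding U'_def B_def[symmetric]
    using P1_sym P1_nn P2_sym P2_nn U V DU_eq DU_pos
    by (intro multiplicative_update_decreases)
      (simp_all add: matrix_transpose_mul matrix_mul_assoc nonneg_mat_mult nonneg_mat_transpose)
  then show "nmf_obj X A1 A2 Q1 Q2 l1 l2 s1 s2 U' V \<le> nmf_obj X A1 A2 Q1 Q2 l1 l2 s1 s2 U V"
    unfolding obj by linarith
  have "nonneg_mat B"
    unfolding B_def using A1s_nn A2s_nn X V by (intro nonneg_mat_add nonneg_mat_mult)
  with U DU_pos show "nonneg_mat U'"
    unfolding U'_def B_def[symmetric] by (intro nonneg_mat_hadamard_ediv)
qed

lemma frob_sq_transpose: "frob_sq (transpose M) = frob_sq (M::real^'b^'a)"
  by (simp add: frob_sq_eq_inner inner_transpose)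

lemma nmf_obj_transpose:
  "nmf_obj X A1 A2 Q1 Q2 l1 l2 s1 s2 U V =
   nmf_obj (transpose X) (transpose A2) (transpose A1) Q2 Q1 l2 l1 s2 s1 V U"
  unfolding nmf_obj_def Let_def
  using frob_sq_transpose[of "A1 ** (X - U ** transpose V)"]
    frob_sq_transpose[of "(X - U ** transpose V) ** A2"]
    frob_sq_transpose[of "(mat 1 - Q1 ** transpose Q1) ** (U ** transpose V)"]
    frob_sq_transpose[of "U ** transpose V ** (mat 1 - Q2 ** transpose Q2)"]
  by (simp add: transpose_diff matrix_transpose_mul transpose_complement_projector)

lemma nmf_update_V:
  fixes X :: "real^'n^'m" and A1 :: "real^'m^'k" and A2 :: "real^'k^'n"
    and Q1 :: "real^'c^'m" and Q2 :: "real^'d^'n"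
    and U :: "real^'r^'m" and V :: "real^'r^'n" and l1 l2 s1 s2 :: real
  assumes X: "nonneg_mat X" and U: "nonneg_mat U" and V: "nonneg_mat V"
    and Q1: "transpose Q1 ** Q1 = mat 1" and Q2: "transpose Q2 ** Q2 = mat 1"
    and s1a: "s1 \<ge> max_negpart (transpose A1 ** A1)"
    and s1b: "s1 \<ge> max_negpart (transpose A1 ** A1 + l1 *\<^sub>R (mat 1 - Q1 ** transpose Q1))"
    and s2a: "s2 \<ge> max_negpart (A2 ** transpose A2)"
    and s2b: "s2 \<ge> max_negpart (A2 ** transpose A2 + l2 *\<^sub>R (mat 1 - Q2 ** transpose Q2))"
  defines "A1s \<equiv> transpose A1 ** A1 + s1 *\<^sub>R ones_mat"
    and "A2s \<equiv> A2 ** transpose A2 + s2 *\<^sub>R ones_mat"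
  defines "P1 \<equiv> A1s + l1 *\<^sub>R (mat 1 - Q1 ** transpose Q1)"
    and "P2 \<equiv> A2s + l2 *\<^sub>R (mat 1 - Q2 ** transpose Q2)"
  defines "DV \<equiv> V ** transpose U ** P1 ** U + P2 ** V ** transpose U ** U"
  defines "V' \<equiv> hadamard V (ediv (transpose X ** A1s ** U + A2s ** transpose X ** U) DV)"
  assumes DV_pos: "pos_mat DV"
  shows "nmf_obj X A1 A2 Q1 Q2 l1 l2 s1 s2 U V' \<le> nmf_obj X A1 A2 Q1 Q2 l1 l2 s1 s2 U V
    \<and> nonneg_mat V'"
proof -
  have "nmf_obj (transpose X) (transpose A2) (transpose A1) Q2 Q1 l2 l1 s2 s1 V' U
      \<le> nmf_obj (transpose X) (transpose A2) (transpose A1) Q2 Q1 l2 l1 s2 s1 V U \<and> nonneg_mat V'"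
    using nmf_update_U[where X = "transpose X" and ?A1.0 = "transpose A2" and ?A2.0 = "transpose A1"
        and ?Q1.0 = Q2 and ?Q2.0 = Q1 and ?l1.0 = l2 and ?l2.0 = l1 and ?s1.0 = s2 and ?s2.0 = s1
        and U = V and V = U]
      X U V Q1 Q2 s1a s1b s2a s2b DV_pos
    by (simp add: V'_def DV_def P1_def P2_def A1s_def A2s_def nonneg_mat_transpose add.commute)
  then show ?thesis
    by (simp only: nmf_obj_transpose[of X A1 A2 Q1 Q2 l1 l2 s1 s2 U])
qed

theorem mainTheorem8:
  fixes X :: "real^'n^'m" and A1 :: "real^'m^'k" and A2 :: "real^'k^'n"
    and Q1 :: "real^'c^'m" and Q2 :: "real^'d^'n"
    and U :: "real^'r^'m" and V :: "real^'r^'n"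
    and l1 l2 s1 s2 :: real
  assumes X_nn: "nonneg_mat X"
    and inv: "invertible (A1 ** X ** A2)"
    and Q1: "orthonormal_basis_cols Q1 (span (columns (X ** A2)))"
    and Q2: "orthonormal_basis_cols Q2 (span (rows (A1 ** X)))"
    and l1: "l1 \<ge> 0" and l2: "l2 \<ge> 0"
    and s1a: "s1 \<ge> max_negpart (transpose A1 ** A1)"
    and s1b: "s1 \<ge> max_negpart (transpose A1 ** A1 + l1 *\<^sub>R (mat 1 - Q1 ** transpose Q1))"
    and s2a: "s2 \<ge> max_negpart (A2 ** transpose A2)"
    and s2b: "s2 \<ge> max_negpart (A2 ** transpose A2 + l2 *\<^sub>R (mat 1 - Q2 ** transpose Q2))"
    and U_nn: "nonneg_mat U" and V_nn: "nonneg_mat V"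
  shows
   "(let A1s = transpose A1 ** A1 + s1 *\<^sub>R ones_mat;
         A2s = A2 ** transpose A2 + s2 *\<^sub>R ones_mat;
         P1 = A1s + l1 *\<^sub>R (mat 1 - Q1 ** transpose Q1);
         P2 = A2s + l2 *\<^sub>R (mat 1 - Q2 ** transpose Q2);
         DU = P1 ** U ** transpose V ** V + U ** transpose V ** P2 ** V;
         U' = hadamard U (ediv (A1s ** X ** V + X ** A2s ** V) DU);
         DV = V ** transpose U ** P1 ** U + P2 ** V ** transpose U ** U;
         V' = hadamard V (ediv (transpose X ** A1s ** U + A2s ** transpose X ** U) DV)
     in (pos_mat DU \<longrightarrow>
           nmf_obj X A1 A2 Q1 Q2 l1 l2 s1 s2 U' V \<le> nmf_obj X A1 A2 Q1 Q2 l1 l2 s1 s2 U V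
           \<and> nonneg_mat U')
      \<and> (pos_mat DV \<longrightarrow>
           nmf_obj X A1 A2 Q1 Q2 l1 l2 s1 s2 U V' \<le> nmf_obj X A1 A2 Q1 Q2 l1 l2 s1 s2 U V
           \<and> nonneg_mat V'))"
proof -
  have Q1_orth: "transpose Q1 ** Q1 = mat 1" and Q2_orth: "transpose Q2 ** Q2 = mat 1"
    using Q1 Q2 by (simp_all add: orthonormal_basis_cols_def)
  show ?thesis
    unfolding Let_def
    using nmf_update_U[OF X_nn U_nn V_nn Q1_orth Q2_orth s1a s1b s2a s2b]
      nmf_update_V[OF X_nn U_nn V_nn Q1_orth Q2_orth s1a s1b s2a s2b]
    by blast
qed

end
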